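(* Let $X,Y\in\mathbb{R}^{n\times n}$ and define $L:\mathbb{R}^{n\times n}\to\mathbb{R}^{n\times n}$ by $L(A)=XAY$. Then $L$ maps every minimally semipositive $n\times n$ matrix to a minimally semipositive matrix if and only if either both $X$ and $Y$ are inverse nonnegative, or both $-X$ and $-Y$ are inverse nonnegative.
   Context: For a matrix or vector, $\geq 0$ means entrywise nonnegative and $>0$ entrywise positive. A matrix $A\in\mathbb{R}^{m\times n}$ is semipositive if there exists $x\in\mathbb{R}^n$ with $x\geq 0$ and $Ax>0$. $A$ is minimally semipositive if it is semipositive and no submatrix obtained from $A$ by deleting one or more columns is semipositive. A square matrix $A$ is inverse nonnegative if $A$ is invertible and $A^{-1}\geq 0$. *)

theory Defs
  imports "HOL-Analysis.Analysis"
begin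

definition nonneg_vec :: "real ^ 'n \<Rightarrow> bool" where
  "nonneg_vec x \<longleftrightarrow> (\<forall>i. x $ i \<ge> 0)"

definition pos_vec :: "real ^ 'n \<Rightarrow> bool" where
  "pos_vec x \<longleftrightarrow> (\<forall>i. x $ i > 0)"

definition nonneg_mat :: "real ^ 'n ^ 'm \<Rightarrow> bool" where
  "nonneg_mat A \<longleftrightarrow> (\<forall>i j. A $ i $ j \<ge> 0)"

text \<open>The submatrix of A consisting of the columns indexed by S is semipositive:
  there is x \<ge> 0 (in R^S) with (A restricted to columns S) x > 0; equivalently
  a vector x \<ge> 0 in R^n supported in S with A x > 0.\<close>

definition semipositive_cols :: "real ^ 'n ^ 'm \<Rightarrow> 'n set \<Rightarrow> bool" where
  "semipositive_cols A S \<longleftrightarrow>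
     (\<exists>x. nonneg_vec x \<and> (\<forall>j. j \<notin> S \<longrightarrow> x $ j = 0) \<and> pos_vec (A *v x))"

definition semipositive :: "real ^ 'n ^ 'm \<Rightarrow> bool" where
  "semipositive A \<longleftrightarrow> (\<exists>x. nonneg_vec x \<and> pos_vec (A *v x))"

definition minimally_semipositive :: "real ^ 'n ^ 'm \<Rightarrow> bool" where
  "minimally_semipositive A \<longleftrightarrow>
     semipositive A \<and> (\<forall>S. S \<subset> UNIV \<longrightarrow> \<not> semipositive_cols A S)"

definition inverse_nonnegative :: "real ^ 'n ^ 'n \<Rightarrow> bool" where
  "inverse_nonnegative A \<longleftrightarrow> invertible A \<and> nonneg_mat (matrix_inv A)"

end

theory Submission
  imports Defs
begin

(* Minimally semipositive square matrices are exactly the inverse nonnegative ones. A minimally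
   semipositive A is monotone (A w \<ge> 0 forces w \<ge> 0): otherwise, moving from a semipositivity
   witness x > 0 in direction w one reaches the boundary of the orthant while A keeps the point
   strictly positive, contradicting minimality. A monotone square matrix is injective, and the
   columns of its inverse are nonnegative.
   So A \<mapsto> X A Y must preserve inverse nonnegativity. Taking A = I shows that X and Y are
   invertible; taking A = (I + t E_kl)^-1 for t \<ge> 0 gives
   (Y^-1 X^-1)_ij + t (Y^-1)_ik (X^-1)_lj \<ge> 0 for all t, so every entry of Y^-1 times every entry
   of X^-1 is nonnegative, and both inverses have one common sign. *)

lemma
  assumes "invertible A"
  shows matrix_inv_right: "A ** matrix_inv A = mat 1"
    and matrix_inv_left: "matrix_inv A ** A = mat 1"
  using someI_ex[OF assms[unfolded invertible_def]] unfolding matrix_inv_def by blast+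

lemma matrix_inv_unique:
  fixes A B :: "'a::field ^ 'n ^ 'n"
  assumes "A ** B = mat 1"
  shows "matrix_inv A = B"
proof -
  have "invertible A"
    using assms invertible_right_inverse by blast
  then have "matrix_inv A = (matrix_inv A ** A) ** B"
    using assms by (simp flip: matrix_mul_assoc)
  then show ?thesis
    using \<open>invertible A\<close> by (simp add: matrix_inv_left)
qed

lemma matrix_inv_neq_0:
  fixes A :: "'a::field ^ 'n ^ 'n"
  assumes "invertible A"
  shows "matrix_inv A \<noteq> 0"
proof
  assume "matrix_inv A = 0"
  then have "(mat 1 :: 'a ^ 'n ^ 'n) = 0"
    using matrix_inv_right[OF assms] by simp
  then have "(mat 1 :: 'a ^ 'n ^ 'n) $ i $ i = 0" for i
    by simp
  then show False
    by (simp add: mat_def)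
qed

lemma invertible_mult_factors:
  fixes A B :: "'a::field ^ 'n ^ 'n"
  assumes "invertible (A ** B)"
  shows "invertible A" "invertible B"
proof -
  obtain M where "A ** B ** M = mat 1" "M ** (A ** B) = mat 1"
    using assms unfolding invertible_def by blast
  then have "A ** (B ** M) = mat 1" "(M ** A) ** B = mat 1"
    by (simp_all add: matrix_mul_assoc)
  then show "invertible A" "invertible B"
    using invertible_right_inverse invertible_left_inverse by blast+
qed

lemma matrix_mult_add_rdistrib:
  fixes A B :: "'a::semiring_1 ^ 'n ^ 'm"
  shows "(A + B) ** C = A ** C + B ** C"
  by (simp add: vec_eq_iff matrix_matrix_mult_def sum.distrib algebra_simps)

lemma matrix_mult_uminus_left:
  fixes A :: "'a::ring_1 ^ 'n ^ 'm"
  shows "(- A) ** B = - (A ** B)"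
  by (simp add: vec_eq_iff matrix_matrix_mult_def sum_negf)

lemma matrix_mult_uminus_right:
  fixes A :: "'a::ring_1 ^ 'n ^ 'm"
  shows "A ** (- B) = - (A ** B)"
  by (simp add: vec_eq_iff matrix_matrix_mult_def sum_negf)

lemma nonneg_mat_mult:
  assumes "nonneg_mat A" "nonneg_mat B"
  shows "nonneg_mat (A ** B)"
  using assms unfolding nonneg_mat_def by (simp add: matrix_matrix_mult_def sum_nonneg)

lemma inverse_nonnegative_iff_right_inverse:
  fixes A :: "real ^ 'n ^ 'n"
  shows "inverse_nonnegative A \<longleftrightarrow> (\<exists>B. A ** B = mat 1 \<and> nonneg_mat B)"
proof
  assume "inverse_nonnegative A"
  then show "\<exists>B. A ** B = mat 1 \<and> nonneg_mat B"
    unfolding inverse_nonnegative_def using matrix_inv_right by blast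
next
  assume "\<exists>B. A ** B = mat 1 \<and> nonneg_mat B"
  then obtain B where "A ** B = mat 1" "nonneg_mat B"
    by blast
  then show "inverse_nonnegative A"
    unfolding inverse_nonnegative_def
    using invertible_right_inverse matrix_inv_unique by auto
qed

lemma inverse_nonnegative_mat_1: "inverse_nonnegative (mat 1 :: real ^ 'n ^ 'n)"
  unfolding inverse_nonnegative_iff_right_inverse
  by (rule exI[of _ "mat 1"]) (simp add: nonneg_mat_def, simp add: mat_def)

lemma inverse_nonnegative_mult:
  assumes "inverse_nonnegative A" "inverse_nonnegative B"
  shows "inverse_nonnegative (A ** B)"
proof -
  have "A ** B ** (matrix_inv B ** matrix_inv A) = A ** (B ** matrix_inv B) ** matrix_inv A"
    by (simp add: matrix_mul_assoc)
  also have "\<dots> = mat 1"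
    using assms unfolding inverse_nonnegative_def by (simp add: matrix_inv_right)
  finally have "A ** B ** (matrix_inv B ** matrix_inv A) = mat 1" .
  moreover have "nonneg_mat (matrix_inv B ** matrix_inv A)"
    using assms unfolding inverse_nonnegative_def by (simp add: nonneg_mat_mult)
  ultimately show ?thesis
    unfolding inverse_nonnegative_iff_right_inverse by blast
qed

lemma inverse_nonnegative_uminusI:
  fixes A :: "real ^ 'n ^ 'n"
  assumes "invertible A" "nonneg_mat (- matrix_inv A)"
  shows "inverse_nonnegative (- A)"
proof -
  have "(- A) ** (- matrix_inv A) = mat 1"
    using matrix_inv_right[OF assms(1)]
    by (simp add: matrix_mult_uminus_left matrix_mult_uminus_right)
  then show ?thesis
    using assms(2) unfolding inverse_nonnegative_iff_right_inverse by blast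
qed

lemma pos_vec_ray_reaches_boundary:
  fixes x w :: "real ^ 'n"
  assumes x: "pos_vec x" and wi: "w $ i < 0"
  shows "\<exists>t>0. nonneg_vec (x + t *\<^sub>R w) \<and> \<not> pos_vec (x + t *\<^sub>R w)"
proof -
  let ?ratios = "(\<lambda>j. x $ j / - w $ j) ` {j. w $ j < 0}"
  define t where "t = Min ?ratios"
  have fin: "finite ?ratios" and ne: "?ratios \<noteq> {}"
    using wi by auto
  obtain j where j: "w $ j < 0" "t = x $ j / - w $ j"
    using Min_in[OF fin ne] unfolding t_def by auto
  have "t > 0"
    using j x unfolding pos_vec_def by (simp add: divide_pos_neg)
  have "0 \<le> x $ k + t * w $ k" for k
  proof (cases "w $ k < 0")
    case True
    then have "t \<le> x $ k / - w $ k"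
      unfolding t_def using fin by (intro Min_le) auto
    with True show ?thesis
      by (simp add: field_simps)
  next
    case False
    then show ?thesis
      using x \<open>t > 0\<close> unfolding pos_vec_def
      by (intro add_nonneg_nonneg) (auto simp: less_imp_le not_less)
  qed
  moreover have "x $ j + t * w $ j = 0"
    using j by (simp add: field_simps)
  ultimately show ?thesis
    using \<open>t > 0\<close> unfolding nonneg_vec_def pos_vec_def
    by (intro exI[of _ t]) (auto simp: not_less intro!: exI[of _ j])
qed

lemma minimally_semipositive_pos_vec:
  assumes "minimally_semipositive A" "nonneg_vec x" "pos_vec (A *v x)"
  shows "pos_vec x"
proof (rule ccontr)
  let ?S = "{k. x $ k \<noteq> 0}"
  assume "\<not> pos_vec x"
  with assms(2) have "?S \<subset> UNIV"
    unfolding pos_vec_def nonneg_vec_def by (auto simp: less_le)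
  moreover have "semipositive_cols A ?S"
    unfolding semipositive_cols_def using assms(2,3) by auto
  ultimately show False
    using assms(1) unfolding minimally_semipositive_def by blast
qed

lemma minimally_semipositive_monotone:
  assumes msp: "minimally_semipositive A" and Aw: "nonneg_vec (A *v w)"
  shows "nonneg_vec w"
proof (rule ccontr)
  assume "\<not> nonneg_vec w"
  then obtain i where "w $ i < 0"
    unfolding nonneg_vec_def by (auto simp: not_le)
  obtain x where "nonneg_vec x" "pos_vec (A *v x)"
    using msp unfolding minimally_semipositive_def semipositive_def by blast
  then have "pos_vec x"
    using minimally_semipositive_pos_vec[OF msp] by blast
  then obtain t where t: "t > 0" "nonneg_vec (x + t *\<^sub>R w)" "\<not> pos_vec (x + t *\<^sub>R w)"
    using pos_vec_ray_reaches_boundary \<open>w $ i < 0\<close> by blast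
  have "A *v (x + t *\<^sub>R w) = A *v x + t *\<^sub>R (A *v w)"
    by (simp add: matrix_vector_right_distrib matrix_vector_mult_scaleR)
  then have "pos_vec (A *v (x + t *\<^sub>R w))"
    using \<open>pos_vec (A *v x)\<close> Aw \<open>t > 0\<close> unfolding pos_vec_def nonneg_vec_def
    by (simp add: add_pos_nonneg)
  then show False
    using minimally_semipositive_pos_vec[OF msp t(2)] t(3) by blast
qed

lemma inverse_nonnegative_if_monotone:
  fixes A :: "real ^ 'n ^ 'n"
  assumes mono: "\<And>w. nonneg_vec (A *v w) \<Longrightarrow> nonneg_vec w"
  shows "inverse_nonnegative A"
proof -
  have "z = 0" if "A *v z = 0" for z
  proof -
    have "A *v (- z) = - (A *v z)"
      by (simp add: matrix_vector_mult_def vec_eq_iff sum_negf)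
    then have "nonneg_vec z" "nonneg_vec (- z)"
      using mono[of z] mono[of "- z"] that by (simp_all add: nonneg_vec_def)
    then show "z = 0"
      unfolding nonneg_vec_def by (simp add: vec_eq_iff order_antisym)
  qed
  then have inv: "invertible A"
    using matrix_left_invertible_ker invertible_left_inverse by blast
  have "nonneg_vec (matrix_inv A *v axis k 1)" for k
  proof (rule mono)
    have "A *v (matrix_inv A *v axis k 1) = axis k 1"
      by (simp add: matrix_vector_mul_assoc matrix_inv_right[OF inv])
    then show "nonneg_vec (A *v (matrix_inv A *v axis k 1))"
      by (simp add: nonneg_vec_def axis_def)
  qed
  then have "nonneg_mat (matrix_inv A)"
    by (simp add: nonneg_mat_def nonneg_vec_def matrix_vector_mult_basis column_def)
  with inv show ?thesis
    unfolding inverse_nonnegative_def by blast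
qed

lemma minimally_semipositive_if_inverse_nonnegative:
  fixes A :: "real ^ 'n ^ 'n"
  assumes "inverse_nonnegative A"
  shows "minimally_semipositive A"
proof -
  let ?M = "matrix_inv A"
  have inv: "invertible A" and M: "nonneg_mat ?M"
    using assms unfolding inverse_nonnegative_def by auto
  have "nonneg_vec (?M *v 1)"
    using M unfolding nonneg_vec_def nonneg_mat_def matrix_vector_mult_def
    by (simp add: sum_nonneg)
  moreover have "pos_vec (A *v (?M *v 1))"
    by (simp add: matrix_vector_mul_assoc matrix_inv_right[OF inv] pos_vec_def)
  ultimately have "semipositive A"
    unfolding semipositive_def by blast
  moreover have "\<not> semipositive_cols A S" if "S \<subset> UNIV" for S
  proof
    assume "semipositive_cols A S"
    then obtain x where x: "\<forall>j. j \<notin> S \<longrightarrow> x $ j = 0" "pos_vec (A *v x)"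
      unfolding semipositive_cols_def by blast
    obtain j where "j \<notin> S"
      using \<open>S \<subset> UNIV\<close> by (auto simp: psubset_eq)
    have "?M *v (A *v x) = x"
      by (simp add: matrix_vector_mul_assoc matrix_inv_left[OF inv])
    then have "(?M *v (A *v x)) $ j = 0"
      using x(1) \<open>j \<notin> S\<close> by simp
    then have "(\<Sum>k\<in>UNIV. ?M $ j $ k * (A *v x) $ k) = 0"
      by (simp only: matrix_vector_mult_def[of ?M] vec_lambda_beta)
    moreover have "0 \<le> ?M $ j $ k * (A *v x) $ k" for k
      using M x(2) unfolding nonneg_mat_def pos_vec_def by (simp add: less_imp_le)
    ultimately have "?M $ j $ k * (A *v x) $ k = 0" for k
      by (simp add: sum_nonneg_eq_0_iff)
    then have "?M $ j $ k = 0" for k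
      using x(2) unfolding pos_vec_def by (metis mult_eq_0_iff less_irrefl)
    then have "(?M ** A) $ j $ j = 0"
      by (simp add: matrix_matrix_mult_def)
    then show False
      by (simp add: matrix_inv_left[OF inv] mat_def)
  qed
  ultimately show ?thesis
    unfolding minimally_semipositive_def by blast
qed

lemma minimally_semipositive_iff_inverse_nonnegative:
  fixes A :: "real ^ 'n ^ 'n"
  shows "minimally_semipositive A \<longleftrightarrow> inverse_nonnegative A"
  by (meson minimally_semipositive_if_inverse_nonnegative minimally_semipositive_monotone
      inverse_nonnegative_if_monotone)

definition matrix_unit :: "'m \<Rightarrow> 'n \<Rightarrow> 'a::zero_neq_one ^ 'n ^ 'm" where
  "matrix_unit k l = (\<chi> i j. if i = k \<and> j = l then 1 else 0)"

lemma matrix_unit_sandwich: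
  fixes P :: "'a::semiring_1 ^ 'm ^ 'p"
  shows "(P ** matrix_unit k l ** Q) $ i $ j = P $ i $ k * Q $ l $ j"
proof -
  have entry: "(P ** matrix_unit k l) $ i $ b = (if b = l then P $ i $ k else 0)" for b
    by (simp add: matrix_unit_def matrix_matrix_mult_def if_distrib cong: if_cong)
  have "(P ** matrix_unit k l ** Q) $ i $ j = (\<Sum>b\<in>UNIV. (P ** matrix_unit k l) $ i $ b * Q $ b $ j)"
    by (simp only: matrix_matrix_mult_def[of "P ** matrix_unit k l" Q] vec_lambda_beta)
  also have "\<dots> = (\<Sum>b\<in>UNIV. if b = l then P $ i $ k * Q $ b $ j else 0)"
    by (rule sum.cong) (auto simp: entry)
  finally show ?thesis
    by simp
qed

lemma matrix_unit_mult_self: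
  "matrix_unit k l ** matrix_unit k l =
     (if k = l then matrix_unit k l else (0 :: 'a::semiring_1 ^ 'n ^ 'n))"
proof -
  have "(matrix_unit k l ** matrix_unit k l) $ i $ j = (mat 1 :: 'a ^ 'n ^ 'n) $ i $ k * matrix_unit k l $ l $ j" for i j
    using matrix_unit_sandwich[of "mat 1" k l "matrix_unit k l" i j] by simp
  then show ?thesis
    by (auto simp: vec_eq_iff mat_def matrix_unit_def)
qed

lemma mat_1_plus_matrix_unit_mult:
  "(mat 1 + s *\<^sub>R matrix_unit k l) ** (mat 1 + t *\<^sub>R matrix_unit k l) =
     mat 1 + (s + t + (if k = l then s * t else 0)) *\<^sub>R (matrix_unit k l :: real ^ 'n ^ 'n)"
  by (simp add: matrix_add_ldistrib matrix_mult_add_rdistrib matrix_scalar_ac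
      flip: scalar_matrix_assoc)
    (simp add: matrix_unit_mult_self algebra_simps)

lemma invertible_mat_1_plus_matrix_unit:
  assumes "0 \<le> t"
  shows "invertible (mat 1 + t *\<^sub>R (matrix_unit k l :: real ^ 'n ^ 'n))"
proof -
  define s where "s = - t / (1 + (if k = l then t else 0))"
  have "t + s + (if k = l then t * s else 0) = 0"
  proof (cases "k = l")
    case True
    have "1 + t \<noteq> 0"
      using assms by simp
    with True show ?thesis
      unfolding s_def by (simp add: field_simps)
  qed (simp add: s_def)
  then have "(mat 1 + t *\<^sub>R matrix_unit k l) ** (mat 1 + s *\<^sub>R matrix_unit k l) = (mat 1 :: real ^ 'n ^ 'n)"
    by (simp add: mat_1_plus_matrix_unit_mult)
  then show ?thesis
    using invertible_right_inverse by blast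
qed

lemma nonneg_slope_if_nonneg_on_ray:
  fixes a b :: real
  assumes "\<And>t. 0 \<le> t \<Longrightarrow> 0 \<le> a + t * b"
  shows "0 \<le> b"
proof (rule ccontr)
  assume "\<not> 0 \<le> b"
  then have "0 \<le> (\<bar>a\<bar> + 1) / - b" and "(\<bar>a\<bar> + 1) / - b * b = - (\<bar>a\<bar> + 1)"
    by (simp_all add: field_simps)
  then show False
    using assms[of "(\<bar>a\<bar> + 1) / - b"] by linarith
qed

lemma entry_products_nonneg_if_sandwich_nonneg:
  fixes P :: "real ^ 'n ^ 'm" and Q :: "real ^ 'p ^ 'n"
  assumes "\<And>B. nonneg_mat B \<Longrightarrow> invertible B \<Longrightarrow> nonneg_mat (P ** B ** Q)"
  shows "0 \<le> P $ i $ k * Q $ l $ j"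
proof (rule nonneg_slope_if_nonneg_on_ray)
  fix t :: real
  assume "0 \<le> t"
  let ?B = "mat 1 + t *\<^sub>R matrix_unit k l :: real ^ 'n ^ 'n"
  have "nonneg_mat ?B"
    using \<open>0 \<le> t\<close> by (simp add: nonneg_mat_def mat_def matrix_unit_def)
  then have "0 \<le> (P ** ?B ** Q) $ i $ j"
    using assms invertible_mat_1_plus_matrix_unit[OF \<open>0 \<le> t\<close>] unfolding nonneg_mat_def by blast
  also have "P ** ?B ** Q = P ** Q + t *\<^sub>R (P ** matrix_unit k l ** Q)"
    by (simp add: matrix_add_ldistrib matrix_mult_add_rdistrib matrix_scalar_ac scalar_matrix_assoc)
  finally show "0 \<le> (P ** Q) $ i $ j + t * (P $ i $ k * Q $ l $ j)"
    by (simp add: matrix_unit_sandwich)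
qed

lemma nonneg_mat_same_sign_if_entry_products_nonneg:
  fixes P :: "real ^ 'n ^ 'm" and Q :: "real ^ 'q ^ 'p"
  assumes prod: "\<And>i k l j. 0 \<le> P $ i $ k * Q $ l $ j" and "P \<noteq> 0" "Q \<noteq> 0"
  shows "nonneg_mat P \<and> nonneg_mat Q \<or> nonneg_mat (- P) \<and> nonneg_mat (- Q)"
proof -
  obtain i0 k0 where P0: "P $ i0 $ k0 \<noteq> 0"
    using \<open>P \<noteq> 0\<close> by (auto simp: vec_eq_iff)
  obtain l0 j0 where Q0: "Q $ l0 $ j0 \<noteq> 0"
    using \<open>Q \<noteq> 0\<close> by (auto simp: vec_eq_iff)
  show ?thesis
  proof (cases "P $ i0 $ k0 > 0")
    case True
    then have Q: "0 \<le> Q $ l $ j" for l j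
      using prod[of i0 k0 l j] by (simp add: zero_le_mult_iff)
    then have "0 < Q $ l0 $ j0"
      using Q0 by (simp add: order_less_le)
    then have "0 \<le> P $ i $ k" for i k
      using prod[of i k l0 j0] by (simp add: zero_le_mult_iff)
    with Q show ?thesis
      unfolding nonneg_mat_def by blast
  next
    case False
    then have "P $ i0 $ k0 < 0"
      using P0 by simp
    then have Q: "Q $ l $ j \<le> 0" for l j
      using prod[of i0 k0 l j] by (simp add: zero_le_mult_iff)
    then have "Q $ l0 $ j0 < 0"
      using Q0 by (simp add: order_less_le)
    then have "P $ i $ k \<le> 0" for i k
      using prod[of i k l0 j0] by (simp add: zero_le_mult_iff)
    with Q show ?thesis
      unfolding nonneg_mat_def by simp
  qed
qed

lemma inverse_nonnegative_preserver_cases: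
  fixes X Y :: "real ^ 'n ^ 'n"
  assumes preserves: "\<And>A. inverse_nonnegative A \<Longrightarrow> inverse_nonnegative (X ** A ** Y)"
  shows "inverse_nonnegative X \<and> inverse_nonnegative Y \<or>
    inverse_nonnegative (- X) \<and> inverse_nonnegative (- Y)"
proof -
  have "invertible (X ** Y)"
    using preserves[OF inverse_nonnegative_mat_1] unfolding inverse_nonnegative_def by simp
  then have X: "invertible X" and Y: "invertible Y"
    by (rule invertible_mult_factors)+
  have "nonneg_mat (matrix_inv Y ** B ** matrix_inv X)" if "nonneg_mat B" "invertible B" for B
  proof -
    have "X ** matrix_inv B ** Y ** (matrix_inv Y ** B ** matrix_inv X) =
        X ** (matrix_inv B ** (Y ** matrix_inv Y) ** B) ** matrix_inv X"
      by (simp add: matrix_mul_assoc)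
    also have "\<dots> = mat 1"
      using X Y \<open>invertible B\<close> by (simp add: matrix_inv_left matrix_inv_right)
    finally have "matrix_inv (X ** matrix_inv B ** Y) = matrix_inv Y ** B ** matrix_inv X"
      by (rule matrix_inv_unique)
    moreover have "inverse_nonnegative (matrix_inv B)"
      unfolding inverse_nonnegative_iff_right_inverse
      using matrix_inv_left[OF \<open>invertible B\<close>] \<open>nonneg_mat B\<close> by blast
    then have "inverse_nonnegative (X ** matrix_inv B ** Y)"
      by (rule preserves)
    ultimately show ?thesis
      unfolding inverse_nonnegative_def by simp
  qed
  then have "0 \<le> matrix_inv Y $ i $ k * matrix_inv X $ l $ j" for i k l j
    by (rule entry_products_nonneg_if_sandwich_nonneg)
  then have "nonneg_mat (matrix_inv Y) \<and> nonneg_mat (matrix_inv X) \<or>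
      nonneg_mat (- matrix_inv Y) \<and> nonneg_mat (- matrix_inv X)"
    using matrix_inv_neq_0[OF X] matrix_inv_neq_0[OF Y]
    by (intro nonneg_mat_same_sign_if_entry_products_nonneg)
  then show ?thesis
    using X Y by (meson inverse_nonnegative_def inverse_nonnegative_uminusI)
qed

lemma inverse_nonnegative_preserved:
  fixes X Y :: "real ^ 'n ^ 'n"
  assumes "inverse_nonnegative X \<and> inverse_nonnegative Y \<or>
      inverse_nonnegative (- X) \<and> inverse_nonnegative (- Y)"
    and "inverse_nonnegative A"
  shows "inverse_nonnegative (X ** A ** Y)"
proof -
  have "X ** A ** Y = (- X) ** A ** (- Y)"
    by (simp add: matrix_mult_uminus_left matrix_mult_uminus_right)
  then show ?thesis
    using assms inverse_nonnegative_mult by metis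
qed

theorem mainTheorem6:
  fixes X Y :: "real ^ 'n ^ 'n"
  shows "(\<forall>A :: real ^ 'n ^ 'n. minimally_semipositive A \<longrightarrow>
            minimally_semipositive (X ** A ** Y))
     \<longleftrightarrow> ((inverse_nonnegative X \<and> inverse_nonnegative Y) \<or>
          (inverse_nonnegative (- X) \<and> inverse_nonnegative (- Y)))"
  unfolding minimally_semipositive_iff_inverse_nonnegative
  using inverse_nonnegative_preserver_cases inverse_nonnegative_preserved by blast

end
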